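(* Let $\pi:\mathbf H_o\to\mathbf{WQSym}$ be the projection $\mathcal F\mapsto\pi(S'^{\mathcal F})$ induced by $a_{ij}\mapsto x_j$ on the second realization, and $\iota:\mathbf H_{NCK}\to\mathbf H_o$ the embedding by canonical (preorder) labelling. Then $\pi\circ\iota$ is injective; i.e., the elements $\pi(S'^{\iota(\overline{\mathcal F})})=\sum_u\mathbf M_u$ (sum over packed words $u$ with $u_k<u_l$ whenever $k$ is the parent of $l$ in $\iota(\overline{\mathcal F})$), for $\overline{\mathcal F}$ ranging over plane forests, are linearly independent in $\mathbf{WQSym}$.
   Context: A plane forest is a finite sequence of plane trees (rooted trees whose children are linearly ordered); $\mathbf H_{NCK}$ is the vector space (noncommutative Connes–Kreimer Hopf algebra) with basis the plane forests. For a plane forest $\overline{\mathcal F}$ with $n$ vertices, $\iota(\overline{\mathcal F})$ is the rooted forest on vertex set $[n]$ obtained by numbering the vertices in order of first visit in a left depth-first traversal of the trees from left to right. $\mathbf H_o$ is the Hopf algebra with basis ordered forests (rooted forests on vertex set $[n]$, labels arbitrary). Second realization: over $A'=\{a_{ij}:1\le i\le j\}$ with $a_{hi}\prec a_{ij}$ for $h\le i<j$, $S'^{\mathcal F}$ is the sum of words $w_1\cdots w_n$ with $w_k$ a diagonal letter $a_{ii}$ for each root $k$ and $w_k\prec w_l$ whenever $k$ is the parent of $l$. $\pi$ is the algebra morphism $a_{ij}\mapsto x_j$ into series over $X=\{x_1<x_2<\cdots\}$. A word over positive integers is packed if its set of letters is $\{1,\dots,m\}$; $\mathrm{pack}(w)$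 replaces the $r$-th smallest letter by $r$; $\mathbf M_u=\sum_{\mathrm{pack}(w)=u}w$, and $\mathbf{WQSym}$ is the span of the $\mathbf M_u$. *)

theory Defs
  imports Main
begin

datatype ptree = PNode "ptree list"

type_synonym pforest = "ptree list"

fun psize :: "ptree \<Rightarrow> nat" where
  "psize (PNode cs) = Suc (sum_list (map psize cs))"

definition fsize :: "pforest \<Rightarrow> nat" where
  "fsize ts = sum_list (map psize ts)"

text \<open>Parent-child edges of the canonical labelling iota: vertices are numbered
  in order of first visit of a left depth-first traversal, trees from left to
  right, starting with label off. A pair (k,l) means k is the parent of l.\<close>
fun fedges :: "nat \<Rightarrow> pforest \<Rightarrow> (nat \<times> nat) set" where
  "fedges off [] = {}"
| "fedges off (PNode cs # ts) =
     {(off, off + 1 + fsize (take i cs)) | i. i < length cs}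
     \<union> fedges (Suc off) cs \<union> fedges (off + 1 + fsize cs) ts"

text \<open>iota(F): the ordered forest on vertex set {1..n}, given by its parent relation.\<close>
definition iota_edges :: "pforest \<Rightarrow> (nat \<times> nat) set" where
  "iota_edges F = fedges 1 F"

text \<open>Words over the positive integers are lists of nat all of whose letters are positive;
  series over X are functions from such words to coefficients.\<close>

definition packed :: "nat list \<Rightarrow> bool" where
  "packed u \<longleftrightarrow> (\<exists>m. set u = {1..m})"

definition pack :: "nat list \<Rightarrow> nat list" where
  "pack w = map (\<lambda>x. card {y \<in> set w. y \<le> x}) w"

text \<open>The series M_u = sum of all words w (over positive integers) with pack w = u.\<close>
definition Mser :: "nat list \<Rightarrow> nat list \<Rightarrow> 'k::zero_neq_one" where
  "Mser u w = (if 0 \<notin> set w \<and> pack w = u then 1 else 0)"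

text \<open>Packed words u with u_k < u_l whenever k is the parent of l in iota(F)
  (vertex k corresponds to position k, i.e. list index k-1).\<close>
definition PW :: "pforest \<Rightarrow> nat list set" where
  "PW F = {u. length u = fsize F \<and> packed u \<and>
              (\<forall>(k,l) \<in> iota_edges F. u ! (k - 1) < u ! (l - 1))}"

text \<open>pi(S'^{iota F}) = sum over u in PW F of M_u, as a series (coefficient of word w).\<close>
definition piota :: "pforest \<Rightarrow> nat list \<Rightarrow> 'k::comm_ring_1" where
  "piota F w = (\<Sum>u\<in>PW F. Mser u w)"

end

theory Submission
  imports Defs
begin

(* To every plane forest F attach its depth word: the word whose k-th letter
   is the depth (roots having depth 1) of vertex k in the canonical labelling iota(F).
   The depth word of F is packed and increases along every parent-child edge, so it is
   one of the packed words u indexing pi(S'^{iota F}); and it is the pointwise smallest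
   such word, since any labelling increasing along edges with positive roots dominates
   depth.  Depth words determine forests.  Hence if the depth word of F occurs in the
   expansion of pi(S'^{iota G}) for some G different from F, then the depth word of G is
   pointwise below that of F and different from it, so it has a strictly smaller letter
   sum.  The family is thus unitriangular with respect to the letter sum of depth words,
   and linear independence follows from a general triangularity lemma, proved first. *)

section \<open>Linear independence of unitriangular families\<close>

text \<open>A family of functions f x, each with a leading point lead x where it does not vanish,
  such that f y can be nonzero at lead x only when y has smaller weight than x, is
  linearly independent: a nonzero coefficient of minimal weight cannot be cancelled.\<close>
lemma triangular_independent:
  fixes f :: "'a \<Rightarrow> 'w \<Rightarrow> 'k::field" and lead :: "'a \<Rightarrow> 'w" and wt :: "'a \<Rightarrow> nat"
  assumes "finite S"
    and combination: "\<And>w. (\<Sum>x\<in>S. c x * f x w) = 0"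
    and lead_nonzero: "\<And>x. x \<in> S \<Longrightarrow> f x (lead x) \<noteq> 0"
    and triangular: "\<And>x y. x \<in> S \<Longrightarrow> y \<in> S \<Longrightarrow> y \<noteq> x \<Longrightarrow> f y (lead x) \<noteq> 0 \<Longrightarrow> wt y < wt x"
  shows "\<forall>x\<in>S. c x = 0"
proof (rule ccontr)
  assume "\<not> (\<forall>x\<in>S. c x = 0)"
  then obtain x where x: "x \<in> S" "c x \<noteq> 0"
    and minimal: "\<And>y. y \<in> S \<Longrightarrow> c y \<noteq> 0 \<Longrightarrow> wt x \<le> wt y"
    using ex_has_least_nat[of "\<lambda>y. y \<in> S \<and> c y \<noteq> 0"] by blast
  have others: "c y * f y (lead x) = 0" if "y \<in> S - {x}" for y
    using that minimal triangular[OF x(1)] by fastforce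
  have "0 = (\<Sum>y\<in>S. c y * f y (lead x))" using combination by simp
  also have "\<dots> = c x * f x (lead x) + (\<Sum>y\<in>S - {x}. c y * f y (lead x))"
    using \<open>finite S\<close> x(1) by (simp add: sum.remove)
  also have "(\<Sum>y\<in>S - {x}. c y * f y (lead x)) = 0"
    using others by (intro sum.neutral) blast
  finally show False using x lead_nonzero by simp
qed

lemma fsize_Nil [simp]: "fsize [] = 0"
  by (simp add: fsize_def)

lemma fsize_Cons [simp]: "fsize (t # ts) = psize t + fsize ts"
  by (simp add: fsize_def)

lemma fsize_append [simp]: "fsize (xs @ ys) = fsize xs + fsize ys"
  by (simp add: fsize_def)

lemma psize_PNode [simp]: "psize (PNode cs) = Suc (fsize cs)"
  by (simp add: fsize_def)

declare psize.simps [simp del]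

lemma psize_pos: "psize t > 0"
  by (cases t) simp

lemma pforest_cases: "G = [] \<or> (\<exists>cs ts. G = PNode cs # ts)"
  by (metis list.exhaust ptree.exhaust)

text \<open>The vertices preceding the i-th tree of a forest are fewer than all its vertices;
  so the root of the i-th tree, at position fsize (take i cs), is a genuine vertex.\<close>
lemma fsize_take_less: "i < length cs \<Longrightarrow> fsize (take i cs) < fsize cs"
proof -
  assume i: "i < length cs"
  have "fsize cs = fsize (take i cs) + fsize (drop i cs)"
    by (metis append_take_drop_id fsize_append)
  moreover have "drop i cs = cs ! i # drop (Suc i) cs"
    using i by (simp add: Cons_nth_drop_Suc)
  ultimately show ?thesis using psize_pos[of "cs ! i"] by simp
qed

lemma fedges_range: "(k, l) \<in> fedges off F \<Longrightarrow> off \<le> k \<and> k < l \<and> l < off + fsize F"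
proof (induction off F rule: fedges.induct)
  case (2 off cs ts)
  then show ?case
    using fsize_take_less[of _ cs] by (fastforce simp: less_imp_le_nat)
qed simp

section \<open>The depth word of a plane forest\<close>

fun depth_word :: "nat \<Rightarrow> pforest \<Rightarrow> nat list" where
  "depth_word d [] = []"
| "depth_word d (PNode cs # ts) = d # depth_word (Suc d) cs @ depth_word d ts"

lemma length_depth_word [simp]: "length (depth_word d F) = fsize F"
  by (induction d F rule: depth_word.induct) auto

lemma depth_word_ge: "x \<in> set (depth_word d F) \<Longrightarrow> d \<le> x"
  by (induction d F arbitrary: x rule: depth_word.induct) fastforce+

lemma set_depth_word: "\<exists>k. set (depth_word d F) = {d..<d + k}"
proof (induction d F rule: depth_word.induct)
  case (2 d cs ts)
  obtain k1 k2 where "set (depth_word (Suc d) cs) = {Suc d..<Suc d + k1}"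
    "set (depth_word d ts) = {d..<d + k2}"
    using "2.IH" by blast
  then have "set (depth_word d (PNode cs # ts)) = {d..<d + max (Suc k1) k2}"
    by auto
  then show ?case by blast
qed simp

lemma depth_word_packed: "packed (depth_word 1 F)"
proof -
  obtain k where "set (depth_word 1 F) = {1..<Suc k}"
    using set_depth_word[of 1 F] by auto
  then show ?thesis unfolding packed_def atLeastLessThanSuc_atLeastAtMost by blast
qed

text \<open>The children's depth word consists of letters exceeding d, while the depth word
  of the remaining trees is empty or starts with d: the concatenation can be split.\<close>
lemma depth_word_split:
  "takeWhile (\<lambda>x. d < x) (depth_word (Suc d) cs @ depth_word d ts) = depth_word (Suc d) cs"
  "dropWhile (\<lambda>x. d < x) (depth_word (Suc d) cs @ depth_word d ts) = depth_word d ts"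
proof -
  have children: "\<And>x. x \<in> set (depth_word (Suc d) cs) \<Longrightarrow> d < x"
    using depth_word_ge[of _ "Suc d" cs] by fastforce
  have "depth_word d ts = [] \<or> \<not> d < hd (depth_word d ts)"
    using pforest_cases[of ts] by auto
  then show "takeWhile (\<lambda>x. d < x) (depth_word (Suc d) cs @ depth_word d ts) = depth_word (Suc d) cs"
    and "dropWhile (\<lambda>x. d < x) (depth_word (Suc d) cs @ depth_word d ts) = depth_word d ts"
    using children by (auto simp: takeWhile_eq_Nil_iff dropWhile_eq_self_iff)
qed

lemma depth_word_inj: "depth_word d F = depth_word d G \<Longrightarrow> F = G"
proof (induction d F arbitrary: G rule: depth_word.induct)
  case (1 d)
  then show ?case using pforest_cases[of G] by auto
next
  case (2 d cs ts)
  then obtain cs' ts' where G: "G = PNode cs' # ts'"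
    using pforest_cases[of G] by auto
  have "depth_word (Suc d) cs @ depth_word d ts = depth_word (Suc d) cs' @ depth_word d ts'"
    using "2.prems" G by simp
  then have "depth_word (Suc d) cs = depth_word (Suc d) cs'" "depth_word d ts = depth_word d ts'"
    by (metis depth_word_split)+
  then show ?case using "2.IH" G by simp
qed

lemma depth_word_root: "i < length cs \<Longrightarrow> depth_word d cs ! fsize (take i cs) = d"
proof (induction cs arbitrary: i)
  case (Cons t cs)
  obtain ch where t: "t = PNode ch" by (cases t)
  then show ?case using Cons by (cases i) (simp_all add: nth_append)
qed simp

lemma depth_word_edge:
  "(k, l) \<in> fedges off F \<Longrightarrow> depth_word d F ! (l - off) = Suc (depth_word d F ! (k - off))"
proof (induction off F arbitrary: d rule: fedges.induct)
  case (2 off cs ts)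
  from "2.prems" consider
      (root) i where "k = off" "l = off + 1 + fsize (take i cs)" "i < length cs"
    | (children) "(k, l) \<in> fedges (Suc off) cs"
    | (siblings) "(k, l) \<in> fedges (off + 1 + fsize cs) ts"
    by auto
  then show ?case
  proof cases
    case root
    then show ?thesis
      using fsize_take_less[OF root(3)] depth_word_root[OF root(3), of "Suc d"]
      by (simp add: nth_append)
  next
    case children
    then have "Suc off \<le> k" "k < l" "l < Suc off + fsize cs"
      using fedges_range[OF children] by auto
    then have "l - off = Suc (l - Suc off)" "k - off = Suc (k - Suc off)"
      "k - Suc off < fsize cs" "l - Suc off < fsize cs" by auto
    then show ?thesis using "2.IH"(1)[OF children, of "Suc d"] by (simp add: nth_append)
  next
    case siblings
    then have "off + 1 + fsize cs \<le> k" "k < l"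
      using fedges_range[OF siblings] by auto
    then have "l - off = Suc (l - Suc off)" "k - off = Suc (k - Suc off)"
      "\<not> k - Suc off < fsize cs" "\<not> l - Suc off < fsize cs"
      "k - Suc off - fsize cs = k - Suc (off + fsize cs)"
      "l - Suc off - fsize cs = l - Suc (off + fsize cs)" by auto
    then show ?thesis using "2.IH"(2)[OF siblings, of d] by (simp add: nth_append)
  qed
qed simp

lemma depth_word_minimal:
  assumes "\<forall>(k, l)\<in>fedges off G. f k < (f l :: nat)"
    and "\<forall>i<length G. d \<le> f (off + fsize (take i G))"
    and "i < fsize G"
  shows "depth_word d G ! i \<le> f (off + i)"
  using assms
proof (induction off G arbitrary: d i rule: fedges.induct)
  case (2 off cs ts)
  have root: "d \<le> f off" using "2.prems"(2) by force
  have edges_cs: "\<forall>(k, l)\<in>fedges (Suc off) cs. f k < f l"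
    and edges_ts: "\<forall>(k, l)\<in>fedges (off + 1 + fsize cs) ts. f k < f l"
    using "2.prems"(1) by auto
  have roots_cs: "\<forall>j<length cs. Suc d \<le> f (Suc off + fsize (take j cs))"
  proof (intro allI impI)
    fix j assume "j < length cs"
    then have "(off, off + 1 + fsize (take j cs)) \<in> fedges off (PNode cs # ts)" by auto
    then show "Suc d \<le> f (Suc off + fsize (take j cs))" using "2.prems"(1) root by fastforce
  qed
  have roots_ts: "\<forall>j<length ts. d \<le> f (off + 1 + fsize cs + fsize (take j ts))"
    using "2.prems"(2) by (auto simp: add.assoc)
  show ?case
  proof (cases i)
    case 0
    then show ?thesis using root by simp
  next
    case (Suc j)
    show ?thesis
    proof (cases "j < fsize cs")
      case True
      then show ?thesis using "2.IH"(1)[OF edges_cs roots_cs True] Suc by (simp add: nth_append)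
    next
      case False
      then have "j - fsize cs < fsize ts" using "2.prems"(3) Suc by simp
      from "2.IH"(2)[OF edges_ts roots_ts this] show ?thesis using Suc False by (simp add: nth_append)
    qed
  qed
qed simp

section \<open>The words indexing pi(S'^{iota F})\<close>

lemma depth_word_in_PW: "depth_word 1 F \<in> PW F"
  using depth_word_packed depth_word_edge[of _ _ 1 F 1]
  unfolding PW_def iota_edges_def by auto

lemma depth_word_sum_less:
  assumes in_PW: "depth_word 1 F \<in> PW G" and "G \<noteq> F"
  shows "sum_list (depth_word 1 G) < sum_list (depth_word 1 F)"
proof -
  define w where "w = depth_word 1 F"
  have len: "fsize G = fsize F" using in_PW unfolding PW_def by simp
  have positive: "1 \<le> x" if "x \<in> set w" for x
    using that depth_word_ge unfolding w_def by blast
  have edges: "\<forall>(k, l)\<in>fedges 1 G. w ! (k - 1) < w ! (l - 1)"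
    using in_PW unfolding PW_def iota_edges_def w_def by auto
  have roots: "\<forall>i<length G. 1 \<le> w ! (1 + fsize (take i G) - 1)"
  proof (intro allI impI)
    fix i assume "i < length G"
    then have "fsize (take i G) < length w" using fsize_take_less[of i G] len by (simp add: w_def)
    then show "1 \<le> w ! (1 + fsize (take i G) - 1)" using positive by simp
  qed
  have below: "\<forall>i\<in>{0..<fsize G}. depth_word 1 G ! i \<le> w ! i"
    using depth_word_minimal[of 1 G "\<lambda>k. w ! (k - 1)", OF edges roots] by simp
  have "depth_word 1 G \<noteq> w"
    unfolding w_def using depth_word_inj \<open>G \<noteq> F\<close> by metis
  then obtain i where "i < fsize G" "depth_word 1 G ! i \<noteq> w ! i"
    using len nth_equalityI[of "depth_word 1 G" w] by (auto simp: w_def)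
  with below have "\<exists>i\<in>{0..<fsize G}. depth_word 1 G ! i < w ! i" by force
  with below have "(\<Sum>i = 0..<fsize G. depth_word 1 G ! i) < (\<Sum>i = 0..<fsize G. w ! i)"
    by (intro sum_strict_mono_ex1) auto
  then show ?thesis using len by (simp add: sum_list_sum_nth w_def)
qed

lemma pack_packed: "packed w \<Longrightarrow> pack w = w"
proof -
  assume "packed w"
  then obtain m where m: "set w = {1..m}" unfolding packed_def by auto
  then have "{y \<in> set w. y \<le> x} = {1..x}" if "x \<in> set w" for x
    using that by auto
  then show ?thesis unfolding pack_def by (simp add: map_idI)
qed

lemma finite_PW: "finite (PW F)"
proof -
  have "PW F \<subseteq> {u. set u \<subseteq> {0..fsize F} \<and> length u = fsize F}"
  proof
    fix u assume "u \<in> PW F"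
    then have u: "length u = fsize F" "packed u" unfolding PW_def by auto
    then obtain m where m: "set u = {1..m}" unfolding packed_def by auto
    have "m = card (set u)" using m by simp
    also have "\<dots> \<le> length u" by (rule card_length)
    finally show "u \<in> {u. set u \<subseteq> {0..fsize F} \<and> length u = fsize F}" using u m by auto
  qed
  moreover have "finite {u. set u \<subseteq> {0..fsize F} \<and> length u = fsize F}"
    by (rule finite_lists_length_eq) simp
  ultimately show ?thesis by (rule finite_subset)
qed

text \<open>On a packed word w, pi(S'^{iota G}) takes the value 1 or 0 according as w indexes
  it or not, because w is its own packing.\<close>
lemma piota_packed:
  assumes "packed w" "0 \<notin> set w"
  shows "piota G w = (if w \<in> PW G then 1 else 0)"
proof -
  have "piota G w = (\<Sum>u\<in>PW G. if u = w then 1 else 0)"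
    unfolding piota_def Mser_def using assms pack_packed by (intro sum.cong) auto
  also have "\<dots> = (if w \<in> PW G then 1 else 0)"
    using finite_PW[of G] by (simp add: sum.delta)
  finally show ?thesis .
qed

lemma piota_depth_word_nonzero:
  "(piota G (depth_word 1 F) :: 'k::comm_ring_1) \<noteq> 0 \<longleftrightarrow> depth_word 1 F \<in> PW G"
proof -
  have "packed (depth_word 1 F)" by (rule depth_word_packed)
  moreover have "0 \<notin> set (depth_word 1 F)" using depth_word_ge[of 0 1 F] by auto
  ultimately have "piota G (depth_word 1 F) = (if depth_word 1 F \<in> PW G then 1 else 0 :: 'k)"
    by (rule piota_packed)
  then show ?thesis by simp
qed

theorem mainTheorem6:
  fixes S :: "pforest set" and c :: "pforest \<Rightarrow> 'k::field"
  assumes "finite S"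
    and "\<And>w. (\<Sum>F\<in>S. c F * piota F w) = 0"
  shows "\<forall>F\<in>S. c F = 0"
proof (rule triangular_independent[where lead = "depth_word 1"
      and wt = "\<lambda>F. sum_list (depth_word 1 F)", OF assms])
  show "piota F (depth_word 1 F) \<noteq> 0" for F
    using depth_word_in_PW piota_depth_word_nonzero by blast
  show "sum_list (depth_word 1 G) < sum_list (depth_word 1 F)"
    if "G \<noteq> F" "piota G (depth_word 1 F) \<noteq> 0" for F G
    using that depth_word_sum_less piota_depth_word_nonzero by blast
qed

end
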